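(* Assume $f$ satisfies conditions (A0)–(A3) below. Then there exists a constant $M>0$ (depending on the constants $\alpha,R,K$ of these conditions, but not on the solution) such that every $2\pi$-periodic solution $x$ of $\ddot x(t)=f(t,x(t),\mathbf x_t,\dot x(t))$ satisfies $|\dot x(t)|\le M$ for all $t\in\mathbb R$.
   Context: Let $n,m\ge 1$ be integers, $\mathbf V=\mathbb R^n$ with Euclidean inner product $x\bullet z$ and norm $|x|$. For $\mathbf y=(y^1,\dots,y^m)\in\mathbf V^m$ put $|\mathbf y|:=\max_{j}|y^j|$. Fix reals $0=\tau_0<\tau_1<\dots<\tau_m<2\pi$ with $\tau_{m-j+1}=2\pi-\tau_j$ for $j=1,\dots,m$. Let $f:\mathbb R\times\mathbf V\times\mathbf V^m\times\mathbf V\to\mathbf V$, and for $x:\mathbb R\to\mathbf V$ put $\mathbf x_t:=(x(t-\tau_1),\dots,x(t-\tau_m))$. A $2\pi$-periodic solution is a $C^2$ function $x:\mathbb R\to\mathbf V$ with $x(t+2\pi)=x(t)$ and $\ddot x(t)=f(t,x(t),\mathbf x_t,\dot x(t))$ for all $t$. Conditions: (A0) $f$ is continuous and $2\pi$-periodic in $t$. (A1) There is $R>0$ such that for all $t$, $x,z\in\mathbf V$, $\mathbf y\in\mathbf V^m$: if $|x|\ge R$, $|\mathbf y|\le|x|$ and $x\bullet z=0$, then $x\bullet f(t,x,\mathbf y,z)>0$. (A2) There is a continuous $\phi:[0,\infty)\to(0,\infty)$ with $\int_0^\infty \frac{s\,ds}{\phi(s)}=\infty$ and $|f(t,x,\mathbf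 y,z)|\le\phi(|z|)$ whenever $|x|\le R$, $|\mathbf y|\le R$. (A3) There are $\alpha>0,K>0$ with $|f(t,x,\mathbf y,z)|\le\alpha(x\bullet f(t,x,\mathbf y,z)+|z|^2)+K$ whenever $|x|\le R$, $|\mathbf y|\le R$. *)

theory Defs
  imports "HOL-Analysis.Analysis"
begin

text \<open>Vectors in V^m are represented as functions nat => 'a; only indices 1..m matter.\<close>

definition delay_norm :: "nat \<Rightarrow> (nat \<Rightarrow> 'a::real_normed_vector) \<Rightarrow> real" where
  "delay_norm m y = Max ((\<lambda>j. norm (y j)) ` {1..m})"

definition delayed :: "nat \<Rightarrow> (nat \<Rightarrow> real) \<Rightarrow> (real \<Rightarrow> 'a::real_normed_vector) \<Rightarrow> real \<Rightarrow> (nat \<Rightarrow> 'a)" where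
  "delayed m \<tau> x t = (\<lambda>j. if j \<in> {1..m} then x (t - \<tau> j) else 0)"

definition periodic_solution ::
  "(real \<Rightarrow> 'a \<Rightarrow> (nat \<Rightarrow> 'a) \<Rightarrow> 'a \<Rightarrow> 'a) \<Rightarrow> nat \<Rightarrow> (nat \<Rightarrow> real) \<Rightarrow> (real \<Rightarrow> 'a::euclidean_space) \<Rightarrow> bool" where
  "periodic_solution f m \<tau> x \<longleftrightarrow>
     (\<forall>t. x (t + 2*pi) = x t) \<and>
     (\<forall>t. x differentiable at t) \<and>
     (\<forall>t. (\<lambda>s. vector_derivative x (at s)) differentiable at t) \<and>
     continuous_on UNIV (\<lambda>t. vector_derivative (\<lambda>s. vector_derivative x (at s)) (at t)) \<and>
     (\<forall>t. vector_derivative (\<lambda>s. vector_derivative x (at s)) (at t)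
            = f t (x t) (delayed m \<tau> x t) (vector_derivative x (at t)))"

end

theory Submission
  imports Defs
begin

text \<open>
  If \<open>|x|\<close> attained its maximum over a period at a point \<open>t\<^sub>0\<close> with \<open>|x t\<^sub>0| \<ge> R\<close>, then
  \<open>x \<bullet> x' = 0\<close> there and every delayed value is bounded by \<open>|x t\<^sub>0|\<close>, so (A1) makes
  \<open>(|x|\<^sup>2)'' = 2 (|x'|\<^sup>2 + x \<bullet> x'')\<close> positive at a maximum, which is impossible. Hence
  \<open>|x| < R\<close>, and (A3) becomes \<open>|x''| \<le> w'\<close> with \<open>w = \<alpha> (x \<bullet> x') + K t\<close>.
  For \<open>v = x' t\<close> the function \<open>x' \<bullet> v\<close> vanishes somewhere in \<open>(t - 2\<pi>, t)\<close>, because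
  \<open>x \<bullet> v\<close> is periodic, and its derivative is dominated by \<open>|v| w'\<close>; since
  \<open>w t - w (t - 2\<pi>) = 2\<pi>K\<close>, this gives \<open>|v|\<^sup>2 \<le> 2\<pi>K |v|\<close>. So \<open>M = 2\<pi>K\<close> works.
\<close>

lemma has_real_derivative_inner:
  fixes x y :: "real \<Rightarrow> 'a::real_inner"
  assumes "(x has_vector_derivative a) (at t)" "(y has_vector_derivative b) (at t)"
  shows "((\<lambda>s. x s \<bullet> y s) has_real_derivative (a \<bullet> y t + x t \<bullet> b)) (at t)"
proof -
  have "((\<lambda>s. x s \<bullet> y s) has_derivative (\<lambda>h. x t \<bullet> (h *\<^sub>R b) + (h *\<^sub>R a) \<bullet> y t)) (at t)"
    using assms unfolding has_vector_derivative_def by (intro has_derivative_inner)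
  moreover have "(\<lambda>h. x t \<bullet> (h *\<^sub>R b) + (h *\<^sub>R a) \<bullet> y t) = (*) (a \<bullet> y t + x t \<bullet> b)"
    by (auto simp: fun_eq_iff algebra_simps)
  ultimately show ?thesis unfolding has_field_derivative_def by simp
qed

lemma has_vector_derivative_periodic:
  fixes x :: "real \<Rightarrow> 'a::real_normed_vector"
  assumes per: "\<And>t. x (t + c) = x t" and x': "\<And>t. (x has_vector_derivative x' t) (at t)"
  shows "x' (t + c) = x' t"
proof -
  have "((x \<circ> (\<lambda>s. s + c)) has_vector_derivative (1 *\<^sub>R x' (t + c))) (at t)"
    by (rule vector_diff_chain_at) (auto intro!: derivative_eq_intros x')
  moreover have "x \<circ> (\<lambda>s. s + c) = x" using per by auto
  ultimately have "(x has_vector_derivative x' (t + c)) (at t)" by simp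
  then show ?thesis by (rule vector_derivative_unique_at[OF _ x'])
qed

lemma periodic_shift_of_int:
  fixes x :: "real \<Rightarrow> 'a" and c :: real
  assumes per: "\<And>t. x (t + c) = x t"
  shows "x (t + of_int k * c) = x t"
proof -
  have shift_nat: "x (s + real n * c) = x s" for s n
  proof (induction n)
    case (Suc n)
    have "x (s + real (Suc n) * c) = x ((s + real n * c) + c)" by (simp add: algebra_simps)
    then show ?case using per Suc by simp
  qed simp
  show ?thesis
  proof (cases "k \<ge> 0")
    case True
    then show ?thesis using shift_nat[of t "nat k"] by simp
  next
    case False
    then show ?thesis using shift_nat[of "t + of_int k * c" "nat (- k)"] by (simp add: algebra_simps)
  qed
qed

lemma continuous_periodic_attains_sup:
  fixes g :: "real \<Rightarrow> 'a::linorder_topology"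
  assumes "c > 0" and cont: "continuous_on UNIV g" and per: "\<And>t. g (t + c) = g t"
  obtains t0 where "\<And>s. g s \<le> g t0"
proof -
  obtain t0 where max: "\<forall>s\<in>{0..c}. g s \<le> g t0"
    using continuous_attains_sup[of "{0..c}" g] continuous_on_subset[OF cont, of "{0..c}"] \<open>c > 0\<close>
    by auto
  have "g s \<le> g t0" for s
  proof -
    define k where "k = \<lfloor>s / c\<rfloor>"
    have "of_int k \<le> s / c" "s / c < of_int k + 1"
      unfolding k_def by linarith+
    then have "of_int k * c \<le> s" "s < (of_int k + 1) * c"
      using \<open>c > 0\<close> by (simp_all add: field_simps)
    then have "s + of_int (- k) * c \<in> {0..c}" by (simp add: algebra_simps)
    then show ?thesis using max periodic_shift_of_int[of g c s "- k", OF per] by metis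
  qed
  then show thesis by (rule that)
qed

lemma DERIV_second_nonpos_at_local_max:
  fixes g p :: "real \<Rightarrow> real"
  assumes g': "\<And>s. (g has_real_derivative p s) (at s)"
    and p': "(p has_real_derivative q) (at t0)"
    and "d > 0" and max: "\<forall>s. \<bar>t0 - s\<bar> < d \<longrightarrow> g s \<le> g t0"
  shows "p t0 = 0" and "q \<le> 0"
proof -
  show "p t0 = 0" by (rule DERIV_local_max[OF g' \<open>d > 0\<close> max])
  show "q \<le> 0"
  proof (rule ccontr)
    assume "\<not> q \<le> 0"
    then obtain e where "e > 0" and p_pos: "\<And>h. 0 < h \<Longrightarrow> h < e \<Longrightarrow> p t0 < p (t0 + h)"
      using DERIV_pos_inc_right[OF p'] by force
    define h where "h = min d e / 2"
    have "0 < h" "h < d" "h < e" using \<open>d > 0\<close> \<open>e > 0\<close> by (auto simp: h_def)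
    then obtain z where "t0 < z" "z < t0 + h" and mvt: "g (t0 + h) - g t0 = h * p z"
      using MVT2[of t0 "t0 + h" g p] g' by auto
    then have "p z > 0" using p_pos[of "z - t0"] \<open>h < e\<close> \<open>p t0 = 0\<close> by simp
    then have "h * p z > 0" using \<open>0 < h\<close> by simp
    then have "g (t0 + h) > g t0" using mvt by linarith
    moreover have "g (t0 + h) \<le> g t0" using max \<open>h < d\<close> \<open>0 < h\<close> by simp
    ultimately show False by simp
  qed
qed

lemma periodic_maximum_principle:
  fixes x x' x'' :: "real \<Rightarrow> 'a::real_inner"
  assumes "c > 0" and per: "\<And>t. x (t + c) = x t"
    and x': "\<And>t. (x has_vector_derivative x' t) (at t)"
    and x'': "\<And>t. (x' has_vector_derivative x'' t) (at t)"
    and inner_pos: "\<And>t. R \<le> norm (x t) \<Longrightarrow> (\<forall>s. norm (x s) \<le> norm (x t)) \<Longrightarrow>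
                      x t \<bullet> x' t = 0 \<Longrightarrow> x t \<bullet> x'' t > 0"
  shows "norm (x t) < R"
proof -
  have "continuous_on UNIV (\<lambda>t. x t \<bullet> x t)"
    using continuous_on_vector_derivative[of UNIV x x'] x' by (intro continuous_intros) auto
  then obtain t0 where max: "\<And>s. x s \<bullet> x s \<le> x t0 \<bullet> x t0"
    using continuous_periodic_attains_sup[OF \<open>c > 0\<close>, of "\<lambda>t. x t \<bullet> x t"] per by metis
  then have norm_max: "\<forall>s. norm (x s) \<le> norm (x t0)"
    by (simp add: norm_le)
  have g': "((\<lambda>t. x t \<bullet> x t) has_real_derivative 2 * (x s \<bullet> x' s)) (at s)" for s
    using has_real_derivative_inner[OF x' x', of s] by (simp add: inner_commute)
  have g'': "((\<lambda>t. 2 * (x t \<bullet> x' t)) has_real_derivative 2 * (x' t0 \<bullet> x' t0 + x t0 \<bullet> x'' t0)) (at t0)"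
    by (intro DERIV_cmult has_real_derivative_inner x' x'')
  have "\<forall>s. \<bar>t0 - s\<bar> < 1 \<longrightarrow> x s \<bullet> x s \<le> x t0 \<bullet> x t0"
    using max by blast
  note second_derivative_test = DERIV_second_nonpos_at_local_max[OF g' g'' zero_less_one this]
  have "x t0 \<bullet> x' t0 = 0"
    using second_derivative_test(1) by simp
  moreover have "x t0 \<bullet> x'' t0 \<le> 0"
    using second_derivative_test(2) inner_ge_zero[of "x' t0"] by (simp add: distrib_left del: inner_ge_zero)
  ultimately have "norm (x t0) < R"
    using inner_pos[OF _ norm_max] by force
  then show ?thesis using norm_max[rule_format, of t] by linarith
qed

lemma delay_norm_delayed_le:
  assumes "m \<ge> 1" and "\<And>s. norm (x s) \<le> B"
  shows "delay_norm m (delayed m \<tau> x t) \<le> B"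
  unfolding delay_norm_def using assms by (subst Max_le_iff) (auto simp: delayed_def)

lemma DERIV_abs_le_imp_abs_diff_le:
  fixes h u :: "real \<Rightarrow> real"
  assumes "a \<le> b"
    and h': "\<And>s. a \<le> s \<Longrightarrow> s \<le> b \<Longrightarrow> (h has_real_derivative h' s) (at s)"
    and u': "\<And>s. a \<le> s \<Longrightarrow> s \<le> b \<Longrightarrow> (u has_real_derivative u' s) (at s)"
    and le: "\<And>s. a \<le> s \<Longrightarrow> s \<le> b \<Longrightarrow> \<bar>h' s\<bar> \<le> u' s"
  shows "\<bar>h b - h a\<bar> \<le> u b - u a"
proof -
  have "u a - h a \<le> u b - h b"
  proof (rule DERIV_nonneg_imp_nondecreasing[OF \<open>a \<le> b\<close>])
    show "\<exists>y. ((\<lambda>s. u s - h s) has_real_derivative y) (at s) \<and> 0 \<le> y" if "a \<le> s" "s \<le> b" for s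
      using DERIV_diff[OF u' h'] le that by force
  qed
  moreover have "u a + h a \<le> u b + h b"
  proof (rule DERIV_nonneg_imp_nondecreasing[OF \<open>a \<le> b\<close>])
    show "\<exists>y. ((\<lambda>s. u s + h s) has_real_derivative y) (at s) \<and> 0 \<le> y" if "a \<le> s" "s \<le> b" for s
      using DERIV_add[OF u' h'] le that by force
  qed
  ultimately show ?thesis by linarith
qed

lemma periodic_derivative_orthogonal_in_period:
  fixes x x' :: "real \<Rightarrow> 'a::real_inner"
  assumes "c > 0" and per: "\<And>t. x (t + c) = x t"
    and x': "\<And>t. (x has_vector_derivative x' t) (at t)"
  obtains z where "t - c < z" "z < t" "x' z \<bullet> v = 0"
proof -
  have "((\<lambda>s. x s \<bullet> v) has_real_derivative x' s \<bullet> v) (at s)" for s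
    using has_real_derivative_inner[OF x' has_vector_derivative_const] by simp
  then obtain z where "t - c < z" "z < t" and "x t \<bullet> v - x (t - c) \<bullet> v = c * (x' z \<bullet> v)"
    using MVT2[of "t - c" t "\<lambda>s. x s \<bullet> v" "\<lambda>s. x' s \<bullet> v"] \<open>c > 0\<close> by auto
  moreover have "x (t - c) = x t" using per[of "t - c"] by simp
  ultimately show thesis using that \<open>c > 0\<close> by simp
qed

lemma periodic_derivative_bound:
  fixes x x' x'' :: "real \<Rightarrow> 'a::real_inner"
  assumes "c > 0" and per: "\<And>t. x (t + c) = x t"
    and x': "\<And>t. (x has_vector_derivative x' t) (at t)"
    and x'': "\<And>t. (x' has_vector_derivative x'' t) (at t)"
    and bound: "\<And>t. norm (x'' t) \<le> \<alpha> * (x' t \<bullet> x' t + x t \<bullet> x'' t) + K"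
  shows "norm (x' t) \<le> c * K"
proof -
  define v where "v = x' t"
  define w where "w s = \<alpha> * (x s \<bullet> x' s) + K * s" for s
  have w': "(w has_real_derivative \<alpha> * (x' s \<bullet> x' s + x s \<bullet> x'' s) + K) (at s)" for s
    unfolding w_def
    by (auto intro!: derivative_eq_intros has_real_derivative_inner[OF x' x''])
  have h': "((\<lambda>s. x' s \<bullet> v) has_real_derivative x'' s \<bullet> v) (at s)" for s
    using has_real_derivative_inner[OF x'' has_vector_derivative_const] by simp
  have h'_le: "\<bar>x'' s \<bullet> v\<bar> \<le> norm v * (\<alpha> * (x' s \<bullet> x' s + x s \<bullet> x'' s) + K)" for s
    using Cauchy_Schwarz_ineq2[of "x'' s" v] mult_right_mono[OF bound[of s], of "norm v"]
    by (simp add: mult.commute)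
  have w_mono: "w a \<le> w b" if "a \<le> b" for a b
    using DERIV_nonneg_imp_nondecreasing[OF that] w' bound norm_ge_zero order_trans by metis
  have "x (t - c) = x t" "x' (t - c) = x' t"
    using per[of "t - c"] has_vector_derivative_periodic[OF per x', of "t - c"] by simp_all
  then have increment: "w t - w (t - c) = c * K"
    unfolding w_def by (simp add: algebra_simps)
  obtain z where z: "t - c < z" "z < t" "x' z \<bullet> v = 0"
    using periodic_derivative_orthogonal_in_period[OF \<open>c > 0\<close> per x'] by blast
  have "norm v * norm v = x' t \<bullet> v - x' z \<bullet> v"
    using z by (simp add: v_def norm_eq_sqrt_inner)
  also have "\<dots> \<le> norm v * w t - norm v * w z"
    using DERIV_abs_le_imp_abs_diff_le[of z t "\<lambda>s. x' s \<bullet> v" _ "\<lambda>s. norm v * w s"]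
      h' DERIV_cmult[OF w'] h'_le z by fastforce
  also have "\<dots> \<le> norm v * (w t - w (t - c))"
    using w_mono[of "t - c" z] z by (simp add: right_diff_distrib mult_left_mono)
  finally have "norm v * norm v \<le> norm v * (c * K)"
    using increment by simp
  moreover have "c * K \<ge> 0"
    using w_mono[of "t - c" t] increment \<open>c > 0\<close> by simp
  ultimately show ?thesis
    unfolding v_def by (cases "norm (x' t) = 0") auto
qed

lemma periodic_solutionD:
  assumes "periodic_solution f m \<tau> x"
  defines "x' \<equiv> \<lambda>t. vector_derivative x (at t)"
  shows "x (t + 2 * pi) = x t"
    and "(x has_vector_derivative x' t) (at t)"
    and "(x' has_vector_derivative vector_derivative x' (at t)) (at t)"
    and "vector_derivative x' (at t) = f t (x t) (delayed m \<tau> x t) (x' t)"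
proof -
  note sol = assms(1)[unfolded periodic_solution_def]
  show "x (t + 2 * pi) = x t" "vector_derivative x' (at t) = f t (x t) (delayed m \<tau> x t) (x' t)"
    using sol unfolding x'_def by blast+
  show "(x has_vector_derivative x' t) (at t)"
    "(x' has_vector_derivative vector_derivative x' (at t)) (at t)"
    using sol unfolding x'_def by (metis vector_derivative_works)+
qed

lemma periodic_solution_norm_less:
  fixes f :: "real \<Rightarrow> 'a::euclidean_space \<Rightarrow> (nat \<Rightarrow> 'a) \<Rightarrow> 'a \<Rightarrow> 'a"
  assumes "m \<ge> 1" and sol: "periodic_solution f m \<tau> x"
    and A1: "\<And>t x y z. R \<le> norm x \<Longrightarrow> delay_norm m y \<le> norm x \<Longrightarrow> x \<bullet> z = 0 \<Longrightarrow>
               x \<bullet> f t x y z > 0"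
  shows "norm (x t) < R"
proof (rule periodic_maximum_principle)
  fix s
  assume "R \<le> norm (x s)" and max: "\<forall>r. norm (x r) \<le> norm (x s)"
    and "x s \<bullet> vector_derivative x (at s) = 0"
  moreover have "delay_norm m (delayed m \<tau> x s) \<le> norm (x s)"
    using delay_norm_delayed_le[OF \<open>m \<ge> 1\<close>] max by blast
  ultimately show "x s \<bullet> vector_derivative (\<lambda>t. vector_derivative x (at t)) (at s) > 0"
    using A1 periodic_solutionD(4)[OF sol] by simp
qed (use periodic_solutionD[OF sol] in auto)

lemma periodic_solution_derivative_bound:
  fixes f :: "real \<Rightarrow> 'a::euclidean_space \<Rightarrow> (nat \<Rightarrow> 'a) \<Rightarrow> 'a \<Rightarrow> 'a"
  assumes "m \<ge> 1" and sol: "periodic_solution f m \<tau> x" and small: "\<And>t. norm (x t) \<le> R"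
    and A3: "\<And>t x y z. norm x \<le> R \<Longrightarrow> delay_norm m y \<le> R \<Longrightarrow>
               norm (f t x y z) \<le> \<alpha> * (x \<bullet> f t x y z + (norm z)\<^sup>2) + K"
  shows "norm (vector_derivative x (at t)) \<le> 2 * pi * K"
proof (rule periodic_derivative_bound)
  show "norm (vector_derivative (\<lambda>t. vector_derivative x (at t)) (at s))
      \<le> \<alpha> * (vector_derivative x (at s) \<bullet> vector_derivative x (at s)
               + x s \<bullet> vector_derivative (\<lambda>t. vector_derivative x (at t)) (at s)) + K" for s
    using A3[OF small delay_norm_delayed_le[OF \<open>m \<ge> 1\<close> small]] periodic_solutionD(4)[OF sol]
    by (simp add: power2_norm_eq_inner algebra_simps)
qed (use periodic_solutionD[OF sol] in auto)

theorem lemma3p3: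
  fixes f :: "real \<Rightarrow> 'a::euclidean_space \<Rightarrow> (nat \<Rightarrow> 'a) \<Rightarrow> 'a \<Rightarrow> 'a"
    and m :: nat and \<tau> :: "nat \<Rightarrow> real"
  assumes m: "m \<ge> 1"
    and tau_pos: "0 < \<tau> 1"
    and tau_mono: "strict_mono_on {1..m} \<tau>"
    and tau_lt: "\<tau> m < 2 * pi"
    and tau_sym: "\<forall>j\<in>{1..m}. \<tau> (m - j + 1) = 2 * pi - \<tau> j"
    and A0: "continuous_on UNIV (\<lambda>(t, x, y, z). f t x y z)"
    and A0per: "\<forall>t x y z. f (t + 2 * pi) x y z = f t x y z"
    and A123: "\<exists>R>0.
       (\<forall>t x y z. norm x \<ge> R \<and> delay_norm m y \<le> norm x \<and> x \<bullet> z = 0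
                   \<longrightarrow> x \<bullet> f t x y z > 0)
     \<and> (\<exists>\<phi> :: real \<Rightarrow> real. continuous_on {0..} \<phi> \<and> (\<forall>s\<ge>0. \<phi> s > 0)
          \<and> filterlim (\<lambda>b. integral {0..b} (\<lambda>s. s / \<phi> s)) at_top at_top
          \<and> (\<forall>t x y z. norm x \<le> R \<and> delay_norm m y \<le> R
                \<longrightarrow> norm (f t x y z) \<le> \<phi> (norm z)))
     \<and> (\<exists>\<alpha>>0. \<exists>K>0. \<forall>t x y z. norm x \<le> R \<and> delay_norm m y \<le> R
                \<longrightarrow> norm (f t x y z) \<le> \<alpha> * (x \<bullet> f t x y z + (norm z)\<^sup>2) + K)"
  shows "\<exists>M>0. \<forall>x. periodic_solution f m \<tau> x \<longrightarrow>
            (\<forall>t. norm (vector_derivative x (at t)) \<le> M)"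
proof -
  from A123 obtain R where
    A1': "\<forall>t x y z. norm x \<ge> R \<and> delay_norm m y \<le> norm x \<and> x \<bullet> z = 0
                   \<longrightarrow> x \<bullet> f t x y z > 0"
    and "\<exists>\<alpha>>0. \<exists>K>0. \<forall>t x y z. norm x \<le> R \<and> delay_norm m y \<le> R
           \<longrightarrow> norm (f t x y z) \<le> \<alpha> * (x \<bullet> f t x y z + (norm z)\<^sup>2) + K"
    by blast
  then obtain \<alpha> K where "K > 0"
    and A3: "\<And>t x y z. norm x \<le> R \<Longrightarrow> delay_norm m y \<le> R \<Longrightarrow>
               norm (f t x y z) \<le> \<alpha> * (x \<bullet> f t x y z + (norm z)\<^sup>2) + K"
    by blast
  have A1: "\<And>t x y z. R \<le> norm x \<Longrightarrow> delay_norm m y \<le> norm x \<Longrightarrow> x \<bullet> z = 0 \<Longrightarrow>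
              x \<bullet> f t x y z > 0"
    using A1' by blast
  have "norm (vector_derivative x (at t)) \<le> 2 * pi * K" if sol: "periodic_solution f m \<tau> x" for x t
  proof (rule periodic_solution_derivative_bound[OF m sol _ A3])
    show "norm (x s) \<le> R" for s
      using periodic_solution_norm_less[OF m sol A1] by (rule less_imp_le)
  qed
  then show ?thesis
    using \<open>K > 0\<close> by (intro exI[of _ "2 * pi * K"]) auto
qed

end
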